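(* Let $n\geq 1$ and $t_i,p_i\in\mathbb{N}_{\geq 0}$ for $1\leq i\leq n$, and set $X=\bigcup_{i=1}^n(t_i+\mathbb{N}_{\geq 0}\cdot p_i)$, where $\mathbb{N}_{\geq 0}\cdot p_i=\{x\cdot p_i\mid x\in\mathbb{N}_{\geq 0}\}$. If there exists $T\geq 0$ such that $\{x\in\mathbb{N}_{\geq 0}\mid x\geq T\}\subseteq X$, then with $T_{\max}=\max\{t_i\mid 1\leq i\leq n\}$ we have $\{x\in\mathbb{N}_{\geq 0}\mid x\geq T_{\max}\}\subseteq X$. *)

theory Defs
  imports Main
begin

end

theory Submission
  imports Defs
begin

text \<open>Let \<open>L > 0\<close> be a common multiple of the nonzero periods. If \<open>x\<close> lies beyond every
  offset, the point \<open>x + k L\<close> with \<open>x + k L \<ge> T\<close> is covered by some progression; its period is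
  nonzero because \<open>x + k L\<close> exceeds the offset, so it divides \<open>k L\<close>, and stepping back by \<open>k L\<close>
  stays inside that progression since \<open>x\<close> is still at least its offset.\<close>

definition arith_prog :: "nat \<Rightarrow> nat \<Rightarrow> nat set" where
  "arith_prog t p = {t + y * p | y. True}"

lemma arith_prog_shift_down:
  assumes "t \<le> x" and "p dvd m" and "x + m \<in> arith_prog t p"
  shows "x \<in> arith_prog t p"
proof -
  obtain y where y: "x + m = t + y * p"
    using assms(3) by (auto simp: arith_prog_def)
  obtain c where c: "m = p * c"
    using assms(2) by blast
  have "x = t + (y - c) * p"
    using y c assms(1) by (simp add: diff_mult_distrib algebra_simps)
  then show ?thesis
    by (auto simp: arith_prog_def)
qed

lemma arith_prog_zero_period: "arith_prog t 0 = {t}"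
  by (simp add: arith_prog_def)

lemma exists_common_multiple_nonzero:
  fixes p :: "'a \<Rightarrow> nat"
  assumes "finite I"
  obtains L where "L > 0" and "\<And>i. i \<in> I \<Longrightarrow> p i \<noteq> 0 \<Longrightarrow> p i dvd L"
proof
  let ?L = "\<Prod>i\<in>I. if p i = 0 then 1 else p i"
  show "?L > 0"
    by (simp add: prod_pos)
  show "p i dvd ?L" if "i \<in> I" "p i \<noteq> 0" for i
    using dvd_prodI[OF assms that(1), of "\<lambda>i. if p i = 0 then 1 else p i"] that(2) by simp
qed

lemma eventually_covered_beyond_offsets:
  fixes t p :: "'a \<Rightarrow> nat"
  assumes "finite I"
    and cover: "{x. x \<ge> T} \<subseteq> (\<Union>i\<in>I. arith_prog (t i) (p i))"
    and beyond: "\<And>i. i \<in> I \<Longrightarrow> t i \<le> x"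
  shows "x \<in> (\<Union>i\<in>I. arith_prog (t i) (p i))"
proof -
  obtain L where L: "L > 0" and dvd_L: "\<And>i. i \<in> I \<Longrightarrow> p i \<noteq> 0 \<Longrightarrow> p i dvd L"
    using exists_common_multiple_nonzero[OF assms(1)] by blast
  define m where "m = (T + 1) * L"
  have "m > T"
  proof -
    have "T \<le> T * L"
      using L by simp
    then show ?thesis
      using L unfolding m_def distrib_right by linarith
  qed
  then have "x + m \<in> (\<Union>i\<in>I. arith_prog (t i) (p i))"
    using cover by (meson mem_Collect_eq subsetD trans_le_add2 less_imp_le)
  then obtain i where i: "i \<in> I" and covered: "x + m \<in> arith_prog (t i) (p i)"
    by blast
  have "p i \<noteq> 0"
  proof
    assume "p i = 0"
    then have "x + m = t i"
      using covered by (simp add: arith_prog_zero_period)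
    then show False
      using beyond[OF i] \<open>m > T\<close> by simp
  qed
  then have "p i dvd m"
    using dvd_L[OF i] by (simp add: m_def)
  then have "x \<in> arith_prog (t i) (p i)"
    using arith_prog_shift_down[OF beyond[OF i] _ covered] by blast
  with i show ?thesis
    by blast
qed

theorem lemma19:
  fixes n :: nat and t p :: "nat \<Rightarrow> nat" and X :: "nat set"
  assumes "n \<ge> 1"
    and "X = (\<Union>i\<in>{1..n}. {t i + x * p i | x. True})"
    and "\<exists>T. {x. x \<ge> T} \<subseteq> X"
  shows "{x. x \<ge> Max {t i | i. i \<in> {1..n}}} \<subseteq> X"
proof
  fix x
  assume "x \<in> {x. x \<ge> Max {t i | i. i \<in> {1..n}}}"
  then have beyond: "t i \<le> x" if "i \<in> {1..n}" for i
    using that Max_ge[of "{t i | i. i \<in> {1..n}}" "t i"] by fastforce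
  have X: "X = (\<Union>i\<in>{1..n}. arith_prog (t i) (p i))"
    using assms(2) by (simp add: arith_prog_def)
  obtain T where "{x. x \<ge> T} \<subseteq> X"
    using assms(3) by blast
  then show "x \<in> X"
    unfolding X using eventually_covered_beyond_offsets[of "{1..n}"] beyond by blast
qed

end
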